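(* Let $X=\ell_p$ for some $1\le p<\infty$, or $X=c_0$, considered as a Banach algebra under coordinatewise multiplication, and let $\lambda\in\mathbb C$ with $|\lambda|>1$. Let $\lambda B(x(1),x(2),\ldots)=(\lambda x(2),\lambda x(3),\ldots)$. Then $\lambda B$ does not have any frequently hypercyclic algebra. Furthermore, no hypercyclic algebra for $\lambda B$ can contain a frequently hypercyclic vector.
   Context: For an operator $T$ on $X$, a vector $x$ is hypercyclic if its orbit $\{T^nx:n\ge0\}$ is dense; it is frequently hypercyclic if for every non-empty open $U\subset X$ the set $\{n\in\mathbb N_0:T^nx\in U\}$ has positive lower density (lower density of $A\subset\mathbb N_0$: $\liminf_{N\to\infty}\frac{\mathrm{card}(A\cap[0,N])}{N+1}$). A hypercyclic (resp. frequently hypercyclic) algebra for $T$ is a subalgebra $\mathcal A\neq\{0\}$ of $X$ such that every non-zero element of $\mathcal A$ is a hypercyclic (resp. frequently hypercyclic) vector for $T$. *)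

theory Defs
  imports "HOL-Analysis.Analysis" "HOL-Library.Liminf_Limsup" "HOL-Library.Function_Algebras"
begin

definition lp_space :: "real \<Rightarrow> (nat \<Rightarrow> complex) set" where
  "lp_space p = {x. summable (\<lambda>n. norm (x n) powr p)}"

definition lp_norm :: "real \<Rightarrow> (nat \<Rightarrow> complex) \<Rightarrow> real" where
  "lp_norm p x = (\<Sum>n. norm (x n) powr p) powr (1 / p)"

definition c0_space :: "(nat \<Rightarrow> complex) set" where
  "c0_space = {x. x \<longlonglongrightarrow> 0}"

definition c0_norm :: "(nat \<Rightarrow> complex) \<Rightarrow> real" where
  "c0_norm x = (SUP n. norm (x n))"

definition open_in_space :: "(nat \<Rightarrow> complex) set \<Rightarrow> ((nat \<Rightarrow> complex) \<Rightarrow> real)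
    \<Rightarrow> (nat \<Rightarrow> complex) set \<Rightarrow> bool" where
  "open_in_space X N U \<longleftrightarrow> U \<subseteq> X \<and>
     (\<forall>u\<in>U. \<exists>e>0. \<forall>y\<in>X. N (y - u) < e \<longrightarrow> y \<in> U)"

definition hypercyclic_vec :: "(nat \<Rightarrow> complex) set \<Rightarrow> ((nat \<Rightarrow> complex) \<Rightarrow> real)
    \<Rightarrow> ((nat \<Rightarrow> complex) \<Rightarrow> (nat \<Rightarrow> complex)) \<Rightarrow> (nat \<Rightarrow> complex) \<Rightarrow> bool" where
  "hypercyclic_vec X N T x \<longleftrightarrow> x \<in> X \<and>
     (\<forall>y\<in>X. \<forall>e>0. \<exists>n. N ((T ^^ n) x - y) < e)"

definition lower_density :: "nat set \<Rightarrow> ereal" where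
  "lower_density A = liminf (\<lambda>N. ereal (real (card (A \<inter> {0..N})) / real (N + 1)))"

definition freq_hypercyclic_vec :: "(nat \<Rightarrow> complex) set \<Rightarrow> ((nat \<Rightarrow> complex) \<Rightarrow> real)
    \<Rightarrow> ((nat \<Rightarrow> complex) \<Rightarrow> (nat \<Rightarrow> complex)) \<Rightarrow> (nat \<Rightarrow> complex) \<Rightarrow> bool" where
  "freq_hypercyclic_vec X N T x \<longleftrightarrow> x \<in> X \<and>
     (\<forall>U. open_in_space X N U \<and> U \<noteq> {} \<longrightarrow> lower_density {n. (T ^^ n) x \<in> U} > 0)"

definition subalgebra_of :: "(nat \<Rightarrow> complex) set \<Rightarrow> (nat \<Rightarrow> complex) set \<Rightarrow> bool" where
  "subalgebra_of X A \<longleftrightarrow> A \<subseteq> X \<and> 0 \<in> A \<and>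
     (\<forall>x\<in>A. \<forall>y\<in>A. x + y \<in> A) \<and>
     (\<forall>c::complex. \<forall>x\<in>A. (\<lambda>n. c * x n) \<in> A) \<and>
     (\<forall>x\<in>A. \<forall>y\<in>A. (\<lambda>n. x n * y n) \<in> A)"

definition hypercyclic_algebra where
  "hypercyclic_algebra X N T A \<longleftrightarrow> subalgebra_of X A \<and> A \<noteq> {0} \<and>
     (\<forall>x\<in>A. x \<noteq> 0 \<longrightarrow> hypercyclic_vec X N T x)"

definition freq_hypercyclic_algebra where
  "freq_hypercyclic_algebra X N T A \<longleftrightarrow> subalgebra_of X A \<and> A \<noteq> {0} \<and>
     (\<forall>x\<in>A. x \<noteq> 0 \<longrightarrow> freq_hypercyclic_vec X N T x)"

definition scaled_backward_shift :: "complex \<Rightarrow> (nat \<Rightarrow> complex) \<Rightarrow> (nat \<Rightarrow> complex)" where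
  "scaled_backward_shift c x = (\<lambda>n. c * x (Suc n))"

end

theory Submission
  imports Defs
begin

text \<open>If \<open>x\<close> is frequently hypercyclic for \<open>c B\<close> with \<open>\<bar>c\<bar> \<ge> 1\<close>, its orbit returns to
  the open set \<open>{z. sup\<^sub>j \<bar>z j\<bar> < 1}\<close> along a set of times of some lower density \<open>d > 0\<close>.
  A return at time \<open>n\<close> gives \<open>\<bar>c\<^sup>n x m\<bar> \<le> 1\<close> for all \<open>m \<ge> n\<close>, and for large \<open>m\<close> there is a
  return time \<open>n \<le> m\<close> with \<open>n + 1 > d (m + 1)\<close>; hence \<open>c\<^sup>m x m\<^sup>k\<close> is bounded once \<open>k \<ge> 1/d\<close>.
  Since the zeroth coordinate of \<open>(c B)\<^sup>n (x\<^sup>k)\<close> is \<open>c\<^sup>n x n\<^sup>k\<close>, the power \<open>x\<^sup>k\<close>, a non-zero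
  element of every algebra containing \<open>x\<close>, is not even hypercyclic.\<close>

lemma funpow_scaled_backward_shift:
  "(scaled_backward_shift c ^^ n) w = (\<lambda>j. c ^ n * w (j + n))"
  by (induction n) (auto simp: scaled_backward_shift_def fun_eq_iff)

lemma lower_density_empty: "lower_density {} = 0"
  by (simp add: lower_density_def zero_ereal_def[symmetric] Liminf_const)

lemma positive_lower_density_late_elements:
  assumes "lower_density S > 0"
  obtains d n\<^sub>0 where "d > 0"
    and "\<And>m. m \<ge> n\<^sub>0 \<Longrightarrow> \<exists>n\<in>S. n \<le> m \<and> d * real (m + 1) < real (n + 1)"
proof -
  obtain d where "0 < ereal d" and dS: "ereal d < lower_density S"
    using assms ereal_dense2 by blast
  then have d: "d > 0"
    by simp
  have "eventually (\<lambda>m. ereal d < ereal (real (card (S \<inter> {0..m})) / real (m + 1))) sequentially"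
    using less_LiminfD[OF dS[unfolded lower_density_def]] .
  then obtain n\<^sub>0 where n\<^sub>0: "\<And>m. m \<ge> n\<^sub>0 \<Longrightarrow> d * real (m + 1) < real (card (S \<inter> {0..m}))"
    unfolding eventually_sequentially by (auto simp: field_simps)
  have late: "\<exists>n\<in>S. n \<le> m \<and> d * real (m + 1) < real (n + 1)" if "m \<ge> n\<^sub>0" for m
  proof -
    define F where "F = S \<inter> {0..m}"
    have card: "d * real (m + 1) < real (card F)"
      using n\<^sub>0[OF that] unfolding F_def .
    moreover have "0 < d * real (m + 1)"
      using d by simp
    ultimately have "F \<noteq> {}"
      by auto
    moreover have "finite F"
      by (simp add: F_def)
    ultimately have "Max F \<in> S" "Max F \<le> m"
      using Max_in[of F] by (auto simp: F_def)
    moreover have "real (card F) \<le> real (Max F + 1)"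
      using card_le_Suc_Max[OF \<open>finite F\<close>] by simp
    ultimately show ?thesis
      using card by (blast intro: order_less_le_trans)
  qed
  show thesis
    using d late by (rule that)
qed

lemma Bseq_power_weighted_if_frequently_small:
  fixes c :: "'a::real_normed_field"
  assumes c: "norm c \<ge> 1" and d: "d > 0"
    and small: "\<And>m. m \<ge> n\<^sub>0 \<Longrightarrow> \<exists>n\<le>m. d * real (m + 1) < real (n + 1) \<and> norm (c ^ n * x m) \<le> 1"
  shows "\<exists>k\<ge>1. Bseq (\<lambda>m. c ^ m * x m ^ k)"
proof -
  define k where "k = nat \<lceil>1 / d\<rceil>"
  have "real k \<ge> 1 / d"
    unfolding k_def by linarith
  then have kd: "real k * d \<ge> 1"
    using d by (simp add: field_simps)
  then have "k \<ge> 1"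
    using d by (cases k) auto
  have "norm (c ^ m * x m ^ k) \<le> norm c ^ k" if m: "m \<ge> n\<^sub>0" for m
  proof -
    obtain n where n: "n \<le> m" "d * real (m + 1) < real (n + 1)" "norm (c ^ n * x m) \<le> 1"
      using small[OF m] by blast
    have "real (m + 1) \<le> real k * d * real (m + 1)"
      using kd by simp
    also have "\<dots> < real k * real (n + 1)"
      using n(2) \<open>k \<ge> 1\<close> by (simp add: mult.assoc)
    finally have "m \<le> k * n + k"
      by (simp only: of_nat_mult[symmetric] of_nat_less_iff) (simp add: algebra_simps)
    then have "norm c ^ m * norm (x m) ^ k \<le> norm c ^ (k * n + k) * norm (x m) ^ k"
      using c by (intro mult_right_mono power_increasing) auto
    also have "\<dots> = norm c ^ k * norm (c ^ n * x m) ^ k"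
      by (simp add: norm_mult norm_power power_add power_mult_distrib power_mult[symmetric]
          mult.commute mult.left_commute)
    also have "\<dots> \<le> norm c ^ k"
      using n(3) by (simp add: mult_left_le power_le_one)
    finally show ?thesis
      by (simp add: norm_mult norm_power)
  qed
  then have "Bseq (\<lambda>m. c ^ m * x m ^ k)"
    by (intro BfunI) (auto simp: eventually_sequentially)
  with \<open>k \<ge> 1\<close> show ?thesis
    by blast
qed

lemma orbit_misses_first_coordinate_disc_if_Bseq:
  assumes "Bseq (\<lambda>n. c ^ n * y n)"
  obtains t where "\<And>n. norm (((scaled_backward_shift c ^^ n) y) 0 - t) \<ge> 1"
proof -
  obtain K where K: "K > 0" "\<And>n. norm (c ^ n * y n) \<le> K"
    using assms unfolding Bseq_def by auto
  have "norm (c ^ n * y n - complex_of_real (K + 1)) \<ge> 1" for n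
  proof -
    have "K + 1 - norm (c ^ n * y n) \<le> norm (complex_of_real (K + 1) - c ^ n * y n)"
      using norm_triangle_ineq2[of "complex_of_real (K + 1)" "c ^ n * y n"] K(1) by simp
    then show ?thesis
      using K(2)[of n] by (simp add: norm_minus_commute)
  qed
  then show thesis
    by (intro that[of "complex_of_real (K + 1)"]) (simp add: funpow_scaled_backward_shift)
qed

lemma freq_hypercyclic_vec_visits:
  assumes "freq_hypercyclic_vec X N T x" "open_in_space X N U" "U \<noteq> {}"
  shows "\<exists>n. (T ^^ n) x \<in> U"
proof (rule ccontr)
  assume "\<not> ?thesis"
  then have "{n. (T ^^ n) x \<in> U} = {}"
    by auto
  with assms show False
    unfolding freq_hypercyclic_vec_def by (auto simp: lower_density_empty)
qed

lemma subalgebra_power_mem: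
  assumes "subalgebra_of X A" "x \<in> A"
  shows "(\<lambda>n. x n ^ Suc k) \<in> A"
proof (induction k)
  case 0
  show ?case
    using assms(2) by simp
next
  case (Suc k)
  have "\<And>x y. x \<in> A \<Longrightarrow> y \<in> A \<Longrightarrow> (\<lambda>n. x n * y n) \<in> A"
    using assms(1) unfolding subalgebra_of_def by blast
  from this[OF assms(2) Suc] show ?case
    by simp
qed

locale coordinate_dominated_space =
  fixes X :: "(nat \<Rightarrow> complex) set" and N :: "(nat \<Rightarrow> complex) \<Rightarrow> real"
  assumes norm_coordinate_le: "z \<in> X \<Longrightarrow> norm (z j) \<le> N z"
    and diff_mem: "y \<in> X \<Longrightarrow> u \<in> X \<Longrightarrow> y - u \<in> X"
    and first_unit_vector_mem: "(\<lambda>j. if j = 0 then t else 0) \<in> X"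
    and scaled_backward_shift_mem: "w \<in> X \<Longrightarrow> scaled_backward_shift c w \<in> X"
begin

lemma zero_mem: "0 \<in> X"
  using first_unit_vector_mem[of 0] by (simp add: zero_fun_def)

lemma funpow_scaled_backward_shift_mem: "w \<in> X \<Longrightarrow> (scaled_backward_shift c ^^ n) w \<in> X"
  by (induction n) (auto simp: scaled_backward_shift_mem)

lemma norm_coordinate_diff_le: "y \<in> X \<Longrightarrow> u \<in> X \<Longrightarrow> norm (y j - u j) \<le> N (y - u)"
  using norm_coordinate_le[OF diff_mem] by simp

lemma open_first_coordinate_disc: "open_in_space X N {z\<in>X. norm (z 0 - t) < 1}"
  unfolding open_in_space_def
proof (intro conjI ballI)
  fix u
  assume u: "u \<in> {z\<in>X. norm (z 0 - t) < 1}"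
  show "\<exists>e>0. \<forall>y\<in>X. N (y - u) < e \<longrightarrow> y \<in> {z\<in>X. norm (z 0 - t) < 1}"
  proof (intro exI[of _ "1 - norm (u 0 - t)"] conjI ballI impI)
    fix y
    assume "y \<in> X" "N (y - u) < 1 - norm (u 0 - t)"
    moreover have "norm (y 0 - t) \<le> norm (y 0 - u 0) + norm (u 0 - t)"
      using norm_triangle_ineq[of "y 0 - u 0" "u 0 - t"] by simp
    ultimately show "y \<in> {z\<in>X. norm (z 0 - t) < 1}"
      using norm_coordinate_diff_le[of y u 0] u by auto
  qed (use u in auto)
qed auto

lemma open_uniformly_small: "open_in_space X N {z\<in>X. \<exists>s<1. \<forall>j. norm (z j) \<le> s}"
  unfolding open_in_space_def
proof (intro conjI ballI)
  fix u
  assume "u \<in> {z\<in>X. \<exists>s<1. \<forall>j. norm (z j) \<le> s}"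
  then obtain s where s: "s < 1" "\<And>j. norm (u j) \<le> s" and "u \<in> X"
    by auto
  show "\<exists>e>0. \<forall>y\<in>X. N (y - u) < e \<longrightarrow> y \<in> {z\<in>X. \<exists>s<1. \<forall>j. norm (z j) \<le> s}"
  proof (intro exI[of _ "(1 - s) / 2"] conjI ballI impI)
    fix y
    assume y: "y \<in> X" "N (y - u) < (1 - s) / 2"
    have "norm (y j) \<le> (1 + s) / 2" for j
      using norm_coordinate_diff_le[OF y(1) \<open>u \<in> X\<close>, of j] norm_triangle_ineq[of "y j - u j" "u j"]
        s(2)[of j] y(2) by simp
    moreover have "(1 + s) / 2 < 1"
      using s(1) by simp
    ultimately show "y \<in> {z\<in>X. \<exists>s<1. \<forall>j. norm (z j) \<le> s}"
      using y(1) by blast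
  qed (use s in simp)
qed auto

lemma hypercyclic_vec_visits_first_coordinate_disc:
  assumes "hypercyclic_vec X N (scaled_backward_shift c) w"
  shows "\<exists>n. norm (((scaled_backward_shift c ^^ n) w) 0 - t) < 1"
proof -
  let ?e = "\<lambda>j. if j = 0 then t else 0"
  have "w \<in> X" and dense: "\<forall>y\<in>X. \<forall>e>0. \<exists>n. N ((scaled_backward_shift c ^^ n) w - y) < e"
    using assms unfolding hypercyclic_vec_def by auto
  obtain n where n: "N ((scaled_backward_shift c ^^ n) w - ?e) < 1"
    using dense first_unit_vector_mem[of t] zero_less_one by blast
  from \<open>w \<in> X\<close>
  have "norm (((scaled_backward_shift c ^^ n) w) 0 - ?e 0) \<le> N ((scaled_backward_shift c ^^ n) w - ?e)"
    using norm_coordinate_diff_le[of "(scaled_backward_shift c ^^ n) w" ?e 0]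
    by (simp add: funpow_scaled_backward_shift_mem first_unit_vector_mem)
  with n show ?thesis
    by (intro exI[of _ n]) simp
qed

lemma freq_hypercyclic_vec_visits_first_coordinate_disc:
  assumes "freq_hypercyclic_vec X N (scaled_backward_shift c) w"
  shows "\<exists>n. norm (((scaled_backward_shift c ^^ n) w) 0 - t) < 1"
proof -
  have "(\<lambda>j. if j = 0 then t else 0) \<in> {z\<in>X. norm (z 0 - t) < 1}"
    using first_unit_vector_mem by simp
  then obtain n where "(scaled_backward_shift c ^^ n) w \<in> {z\<in>X. norm (z 0 - t) < 1}"
    using freq_hypercyclic_vec_visits[OF assms open_first_coordinate_disc[of t]] by blast
  then show ?thesis
    by blast
qed

lemma not_hypercyclic_if_Bseq:
  assumes "Bseq (\<lambda>n. c ^ n * y n)"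
  shows "\<not> hypercyclic_vec X N (scaled_backward_shift c) y"
    and "\<not> freq_hypercyclic_vec X N (scaled_backward_shift c) y"
  using orbit_misses_first_coordinate_disc_if_Bseq[OF assms]
    hypercyclic_vec_visits_first_coordinate_disc freq_hypercyclic_vec_visits_first_coordinate_disc
  by (meson not_less)+

lemma freq_hypercyclic_vec_nonzero:
  assumes "freq_hypercyclic_vec X N (scaled_backward_shift c) x"
  shows "x \<noteq> 0"
  using freq_hypercyclic_vec_visits_first_coordinate_disc[OF assms, of 2]
  by (auto simp: funpow_scaled_backward_shift)

lemma freq_hypercyclic_vec_power_Bseq:
  assumes c: "norm c \<ge> 1" and x: "freq_hypercyclic_vec X N (scaled_backward_shift c) x"
  shows "\<exists>k\<ge>1. Bseq (\<lambda>m. c ^ m * x m ^ k)"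
proof -
  define V where "V = {z\<in>X. \<exists>s<1. \<forall>j. norm (z j) \<le> s}"
  define S where "S = {n. (scaled_backward_shift c ^^ n) x \<in> V}"
  have "0 \<in> V"
    using zero_mem unfolding V_def by (auto intro: exI[of _ 0])
  then have "lower_density S > 0"
    using x open_uniformly_small unfolding freq_hypercyclic_vec_def S_def V_def by blast
  then obtain d n\<^sub>0 where d: "d > 0"
    and late: "\<And>m. m \<ge> n\<^sub>0 \<Longrightarrow> \<exists>n\<in>S. n \<le> m \<and> d * real (m + 1) < real (n + 1)"
    using positive_lower_density_late_elements by blast
  have "norm (c ^ n * x m) \<le> 1" if "n \<in> S" "n \<le> m" for n m
  proof -
    have "(scaled_backward_shift c ^^ n) x \<in> V"
      using that(1) by (simp add: S_def)
    then obtain s where s: "s < 1" "\<And>j. norm (c ^ n * x (j + n)) \<le> s"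
      unfolding V_def funpow_scaled_backward_shift by auto
    have "norm (c ^ n * x (m - n + n)) \<le> s"
      by (rule s(2))
    with s(1) that(2) show ?thesis
      by simp
  qed
  with late have "\<exists>n\<le>m. d * real (m + 1) < real (n + 1) \<and> norm (c ^ n * x m) \<le> 1"
    if "m \<ge> n\<^sub>0" for m
    using that by blast
  then show ?thesis
    by (rule Bseq_power_weighted_if_frequently_small[OF c d])
qed

lemma subalgebra_with_freq_hypercyclic_vec_has_non_hypercyclic_element:
  assumes "norm c \<ge> 1" "subalgebra_of X A" "x \<in> A"
    and "freq_hypercyclic_vec X N (scaled_backward_shift c) x"
  obtains y where "y \<in> A" "y \<noteq> 0"
    "\<not> hypercyclic_vec X N (scaled_backward_shift c) y"
    "\<not> freq_hypercyclic_vec X N (scaled_backward_shift c) y"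
proof -
  obtain k where "k \<ge> 1" and bounded: "Bseq (\<lambda>m. c ^ m * x m ^ k)"
    using freq_hypercyclic_vec_power_Bseq[OF assms(1,4)] by blast
  then obtain j where k: "k = Suc j"
    using not0_implies_Suc by fastforce
  have "x \<noteq> 0"
    using freq_hypercyclic_vec_nonzero[OF assms(4)] .
  then have "(\<lambda>n. x n ^ k) \<noteq> 0"
    by (auto simp: fun_eq_iff)
  with subalgebra_power_mem[OF assms(2,3), of j] show thesis
    using that not_hypercyclic_if_Bseq[OF bounded] unfolding k by blast
qed

lemma not_freq_hypercyclic_algebra:
  assumes "norm c \<ge> 1"
  shows "\<not> freq_hypercyclic_algebra X N (scaled_backward_shift c) A"
proof
  assume "freq_hypercyclic_algebra X N (scaled_backward_shift c) A"
  then have sub: "subalgebra_of X A" and "A \<noteq> {0}"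
    and fhc: "\<And>x. x \<in> A \<Longrightarrow> x \<noteq> 0 \<Longrightarrow> freq_hypercyclic_vec X N (scaled_backward_shift c) x"
    unfolding freq_hypercyclic_algebra_def by auto
  then obtain x where "x \<in> A" "x \<noteq> 0"
    unfolding subalgebra_of_def by blast
  then obtain y where "y \<in> A" "y \<noteq> 0" "\<not> freq_hypercyclic_vec X N (scaled_backward_shift c) y"
    using subalgebra_with_freq_hypercyclic_vec_has_non_hypercyclic_element[OF assms sub] fhc by metis
  with fhc show False
    by blast
qed

lemma hypercyclic_algebra_has_no_freq_hypercyclic_vec:
  assumes "norm c \<ge> 1" "hypercyclic_algebra X N (scaled_backward_shift c) A" "x \<in> A"
  shows "\<not> freq_hypercyclic_vec X N (scaled_backward_shift c) x"
proof
  assume "freq_hypercyclic_vec X N (scaled_backward_shift c) x"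
  moreover have sub: "subalgebra_of X A"
    and "\<And>y. y \<in> A \<Longrightarrow> y \<noteq> 0 \<Longrightarrow> hypercyclic_vec X N (scaled_backward_shift c) y"
    using assms(2) unfolding hypercyclic_algebra_def by auto
  ultimately show False
    using subalgebra_with_freq_hypercyclic_vec_has_non_hypercyclic_element[OF assms(1) sub assms(3)]
    by metis
qed

end

lemma lp_space_coordinate_dominated:
  assumes p: "p \<ge> 1"
  shows "coordinate_dominated_space (lp_space p) (lp_norm p)"
proof
  fix z j
  assume "z \<in> lp_space p"
  then have s: "summable (\<lambda>n. norm (z n) powr p)"
    unfolding lp_space_def by simp
  have "norm (z j) powr p \<le> (\<Sum>n. norm (z n) powr p)"
    using sum_le_suminf[OF s, of "{j}"] by simp
  then have "(norm (z j) powr p) powr (1 / p) \<le> (\<Sum>n. norm (z n) powr p) powr (1 / p)"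
    using p by (intro powr_mono2) auto
  then show "norm (z j) \<le> lp_norm p z"
    using p by (simp add: powr_powr lp_norm_def)
next
  fix y u
  assume "y \<in> lp_space p" "u \<in> lp_space p"
  then have sy: "summable (\<lambda>n. norm (y n) powr p)" and su: "summable (\<lambda>n. norm (u n) powr p)"
    unfolding lp_space_def by auto
  have bound: "norm ((y - u) n) powr p \<le> 2 powr p * (norm (y n) powr p + norm (u n) powr p)" for n
  proof -
    define M where "M = max (norm (y n)) (norm (u n))"
    have "norm ((y - u) n) \<le> 2 * M"
      using norm_triangle_ineq4[of "y n" "u n"] unfolding M_def by simp
    then have "norm ((y - u) n) powr p \<le> (2 * M) powr p"
      using p by (intro powr_mono2) auto
    also have "\<dots> = 2 powr p * M powr p"
      by (simp add: powr_mult M_def)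
    also have "M powr p \<le> norm (y n) powr p + norm (u n) powr p"
      unfolding M_def by (simp add: max_def)
    finally show ?thesis
      by simp
  qed
  have "summable (\<lambda>n. 2 powr p * (norm (y n) powr p + norm (u n) powr p))"
    by (intro summable_mult summable_add sy su)
  then have "summable (\<lambda>n. norm ((y - u) n) powr p)"
    by (rule summable_comparison_test'[of _ 0]) (use bound in auto)
  then show "y - u \<in> lp_space p"
    unfolding lp_space_def by simp
next
  fix t :: complex
  show "(\<lambda>j. if j = 0 then t else 0) \<in> lp_space p"
    unfolding lp_space_def mem_Collect_eq by (subst summable_Suc_iff[symmetric]) simp
next
  fix w and c :: complex
  assume "w \<in> lp_space p"
  then have "summable (\<lambda>n. norm (w (Suc n)) powr p)"
    unfolding lp_space_def mem_Collect_eq by (subst summable_Suc_iff)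
  then have "summable (\<lambda>n. norm c powr p * norm (w (Suc n)) powr p)"
    by (rule summable_mult)
  then show "scaled_backward_shift c w \<in> lp_space p"
    unfolding lp_space_def scaled_backward_shift_def by (simp add: norm_mult powr_mult)
qed

lemma c0_space_coordinate_dominated: "coordinate_dominated_space c0_space c0_norm"
proof
  fix z j
  assume "z \<in> c0_space"
  then have "Bseq z"
    unfolding c0_space_def by (auto intro: convergent_imp_Bseq convergentI)
  then have "bdd_above (range (\<lambda>n. norm (z n)))"
    by (auto simp: Bseq_def intro: bdd_aboveI)
  then show "norm (z j) \<le> c0_norm z"
    unfolding c0_norm_def by (intro cSUP_upper) auto
next
  fix y u
  assume "y \<in> c0_space" "u \<in> c0_space"
  then show "y - u \<in> c0_space"
    unfolding c0_space_def fun_diff_def using tendsto_diff[of y 0 sequentially u 0] by auto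
next
  fix t :: complex
  show "(\<lambda>j. if j = 0 then t else 0) \<in> c0_space"
    unfolding c0_space_def mem_Collect_eq by (rule LIMSEQ_imp_Suc) simp
next
  fix w and c :: complex
  assume "w \<in> c0_space"
  then have "w \<longlonglongrightarrow> 0"
    unfolding c0_space_def by simp
  then have "(\<lambda>n. c * w (Suc n)) \<longlonglongrightarrow> 0"
    by (intro tendsto_mult_right_zero LIMSEQ_Suc)
  then show "scaled_backward_shift c w \<in> c0_space"
    unfolding c0_space_def scaled_backward_shift_def by simp
qed

theorem corollary1p3:
  fixes X :: "(nat \<Rightarrow> complex) set" and N :: "(nat \<Rightarrow> complex) \<Rightarrow> real" and c :: complex
  assumes "(\<exists>p::real. 1 \<le> p \<and> X = lp_space p \<and> N = lp_norm p) \<or> (X = c0_space \<and> N = c0_norm)"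
    and "norm c > 1"
  shows "(\<nexists>A. freq_hypercyclic_algebra X N (scaled_backward_shift c) A) \<and>
         (\<forall>A. hypercyclic_algebra X N (scaled_backward_shift c) A \<longrightarrow>
              \<not> (\<exists>x\<in>A. freq_hypercyclic_vec X N (scaled_backward_shift c) x))"
proof -
  interpret coordinate_dominated_space X N
    using assms(1) lp_space_coordinate_dominated c0_space_coordinate_dominated by blast
  have "norm c \<ge> 1"
    using assms(2) by simp
  then show ?thesis
    using not_freq_hypercyclic_algebra hypercyclic_algebra_has_no_freq_hypercyclic_vec by blast
qed

end
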